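(* Let $\Lambda\subset\mathbb Z^n$ be an orthogonal sublattice. Then $\Lambda$ is cubiquitous if and only if, up to a change of basis of $\mathbb Z^n$, $\Lambda$ admits a basis $\{b_1,\ldots,b_n\}$ such that the matrix $B=\begin{bmatrix} b_1&\cdots&b_n\end{bmatrix}$ is a block (diagonal) matrix each of whose blocks is one of $$\begin{bmatrix}1\end{bmatrix},\qquad \begin{bmatrix}2\end{bmatrix},\qquad \begin{bmatrix}1&-1\\1&1\end{bmatrix}.$$
   Context: $\mathbb Z^n$ carries the standard dot product $\langle\cdot,\cdot\rangle$ with standard basis $e_1,\ldots,e_n$. A "change of basis of $\mathbb Z^n$" means replacing the standard basis by another orthonormal basis, i.e. applying an automorphism of $\mathbb Z^n$ preserving the dot product (a signed permutation of coordinates). A sublattice $\Lambda\subset\mathbb Z^n$ is full-rank if $\mathrm{rank}\,\Lambda=n$. An orthogonal sublattice is a full-rank sublattice of $\mathbb Z^n$ admitting a basis of pairwise orthogonal vectors. A full-rank sublattice $\Lambda\subset\mathbb Z^n$ is cubiquitous if $\Lambda\cap(x+\{0,1\}^n)\neq\emptyset$ for every $x\in\mathbb Z^n$. *)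

theory Defs
  imports Main "HOL-Combinatorics.Permutations"
begin

text \<open>Vectors of Z^n are modelled as functions nat => int vanishing outside {0..<n}.\<close>

definition zvec :: "nat \<Rightarrow> (nat \<Rightarrow> int) set" where
  "zvec n = {v. \<forall>i\<ge>n. v i = 0}"

definition dot :: "nat \<Rightarrow> (nat \<Rightarrow> int) \<Rightarrow> (nat \<Rightarrow> int) \<Rightarrow> int" where
  "dot n u v = (\<Sum>k<n. u k * v k)"

definition lincomb :: "nat \<Rightarrow> (nat \<Rightarrow> int) \<Rightarrow> (nat \<Rightarrow> nat \<Rightarrow> int) \<Rightarrow> (nat \<Rightarrow> int)" where
  "lincomb n c b = (\<lambda>k. \<Sum>i<n. c i * b i k)"

definition lattice_basis :: "nat \<Rightarrow> (nat \<Rightarrow> int) set \<Rightarrow> (nat \<Rightarrow> nat \<Rightarrow> int) \<Rightarrow> bool" where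
  "lattice_basis n L b \<longleftrightarrow>
     (\<forall>i<n. b i \<in> zvec n) \<and>
     (\<forall>c. lincomb n c b = (\<lambda>_. 0) \<longrightarrow> (\<forall>i<n. c i = 0)) \<and>
     L = {lincomb n c b | c. True}"

definition full_rank_sublattice :: "nat \<Rightarrow> (nat \<Rightarrow> int) set \<Rightarrow> bool" where
  "full_rank_sublattice n L \<longleftrightarrow> L \<subseteq> zvec n \<and> (\<exists>b. lattice_basis n L b)"

definition orthogonal_sublattice :: "nat \<Rightarrow> (nat \<Rightarrow> int) set \<Rightarrow> bool" where
  "orthogonal_sublattice n L \<longleftrightarrow> L \<subseteq> zvec n \<and>
     (\<exists>b. lattice_basis n L b \<and> (\<forall>i<n. \<forall>j<n. i \<noteq> j \<longrightarrow> dot n (b i) (b j) = 0))"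

definition cubiquitous :: "nat \<Rightarrow> (nat \<Rightarrow> int) set \<Rightarrow> bool" where
  "cubiquitous n L \<longleftrightarrow> full_rank_sublattice n L \<and>
     (\<forall>x\<in>zvec n. \<exists>y\<in>L. \<forall>i<n. y i - x i \<in> {0, 1})"

text \<open>Signed permutation of coordinates (automorphism of Z^n preserving the dot product).\<close>
definition signed_perm :: "nat \<Rightarrow> (nat \<Rightarrow> nat) \<Rightarrow> (nat \<Rightarrow> int) \<Rightarrow> (nat \<Rightarrow> int) \<Rightarrow> (nat \<Rightarrow> int)" where
  "signed_perm n p s v = (\<lambda>i. if i < n then s i * v (p i) else 0)"

definition is_signed_perm :: "nat \<Rightarrow> (nat \<Rightarrow> nat) \<Rightarrow> (nat \<Rightarrow> int) \<Rightarrow> bool" where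
  "is_signed_perm n p s \<longleftrightarrow> p permutes {..<n} \<and> (\<forall>i<n. s i = 1 \<or> s i = -1)"

datatype blk = One | Two | Rot

fun bsize :: "blk \<Rightarrow> nat" where
  "bsize One = 1" | "bsize Two = 1" | "bsize Rot = 2"

fun bentry :: "blk \<Rightarrow> nat \<Rightarrow> nat \<Rightarrow> int" where
  "bentry One i j = 1"
| "bentry Two i j = 2"
| "bentry Rot i j = (if i = 0 \<and> j = 1 then -1 else 1)"

fun blockdiag :: "blk list \<Rightarrow> nat \<Rightarrow> nat \<Rightarrow> int" where
  "blockdiag [] i j = 0"
| "blockdiag (b # bs) i j =
     (if i < bsize b \<and> j < bsize b then bentry b i j
      else if bsize b \<le> i \<and> bsize b \<le> j then blockdiag bs (i - bsize b) (j - bsize b)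
      else 0)"

definition block_basis :: "nat \<Rightarrow> (nat \<Rightarrow> nat \<Rightarrow> int) \<Rightarrow> bool" where
  "block_basis n b \<longleftrightarrow> (\<exists>bs. sum_list (map bsize bs) = n \<and>
      (\<forall>i<n. \<forall>j<n. b j i = blockdiag bs i j))"

end

theory Submission
  imports Defs
begin

text \<open>Let b_1, ..., b_n be an orthogonal basis of a cubiquitous L. For y in L, the product
  <y, b_l> is a multiple of |b_l|^2, while cubiquity supplies a lattice point in the unit cube at
  any integer point x. Taking x on a coordinate axis shows that every b_l is a (-1,0,1)-vector or
  2 e_j up to sign. Taking x with <x, b_l> equal to the minimum of <., b_l> over the cube forces
  the lattice point into a corner of the cube that is extreme for b_l; doing this for two basis
  vectors at once shows that overlapping supports coincide and, by a parity argument, that at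
  most two basis vectors share a support. Since some multiple of each e_j lies in L, a support
  has as many coordinates as basis vectors. Grouping coordinates and basis vectors by support and
  adjusting signs then makes the basis matrix block diagonal with blocks [1], [2] and
  [[1,-1],[1,1]]. Conversely, each of these blocks is cubiquitous, and cubiquity is invariant
  under signed permutations.\<close>

section \<open>Integer vectors and lattice bases\<close>

definition axis :: "nat \<Rightarrow> int \<Rightarrow> nat \<Rightarrow> int" where
  "axis j a = (\<lambda>k. if k = j then a else 0)"

lemma axis_zvec: "j < n \<Longrightarrow> axis j a \<in> zvec n"
  unfolding axis_def zvec_def by auto

lemma dot_add_left: "dot n (\<lambda>k. x k + y k) v = dot n x v + dot n y v"
  unfolding dot_def by (simp add: algebra_simps sum.distrib)

lemma dot_diff_left: "dot n (\<lambda>k. x k - y k) v = dot n x v - dot n y v"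
  unfolding dot_def by (simp add: algebra_simps sum_subtractf)

lemma dot_eq_single:
  assumes "j < n" "\<forall>k<n. k \<noteq> j \<longrightarrow> u k = 0"
  shows "dot n u v = u j * v j"
proof -
  have "dot n u v = (\<Sum>k\<in>{j}. u k * v k)"
    unfolding dot_def using assms by (intro sum.mono_neutral_right) auto
  then show ?thesis by simp
qed

lemma dot_eq_pair:
  assumes "j \<noteq> j'" "j < n" "j' < n" "\<forall>k<n. k \<noteq> j \<and> k \<noteq> j' \<longrightarrow> u k = 0"
  shows "dot n u v = u j * v j + u j' * v j'"
proof -
  have "dot n u v = (\<Sum>k\<in>{j, j'}. u k * v k)"
    unfolding dot_def using assms by (intro sum.mono_neutral_right) auto
  then show ?thesis using assms(1) by simp
qed

lemma dot_axis_left: "j < n \<Longrightarrow> dot n (axis j a) v = a * v j"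
  by (subst dot_eq_single[of j]) (auto simp: axis_def)

lemma dot_two_axes:
  "j < n \<Longrightarrow> j' < n \<Longrightarrow> dot n (\<lambda>k. axis j a k + axis j' a' k) v = a * v j + a' * v j'"
  by (simp add: dot_add_left dot_axis_left)

lemma dot_lincomb_left: "dot n (lincomb n c b) w = (\<Sum>i<n. c i * dot n (b i) w)"
proof -
  have "dot n (lincomb n c b) w = (\<Sum>k<n. \<Sum>i<n. c i * b i k * w k)"
    unfolding dot_def lincomb_def by (simp add: sum_distrib_right)
  also have "\<dots> = (\<Sum>i<n. c i * dot n (b i) w)"
    unfolding dot_def by (subst sum.swap) (simp add: sum_distrib_left mult.assoc)
  finally show ?thesis .
qed

lemma lincomb_zvec: "\<forall>i<n. b i \<in> zvec n \<Longrightarrow> lincomb n c b \<in> zvec n"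
  unfolding lincomb_def zvec_def by auto

lemma lincomb_diff: "(\<lambda>k. lincomb n c b k - lincomb n c' b k) = lincomb n (\<lambda>i. c i - c' i) b"
  unfolding lincomb_def by (simp add: sum_subtractf algebra_simps)

lemma lattice_basis_subset_zvec: "lattice_basis n L b \<Longrightarrow> L \<subseteq> zvec n"
  unfolding lattice_basis_def using lincomb_zvec by blast

lemma lattice_basis_diff_mem:
  "lattice_basis n L b \<Longrightarrow> y \<in> L \<Longrightarrow> y' \<in> L \<Longrightarrow> (\<lambda>k. y k - y' k) \<in> L"
  unfolding lattice_basis_def using lincomb_diff by blast

lemma lattice_basis_nonzero:
  assumes B: "lattice_basis n L b" and l: "l < n"
  shows "\<exists>k<n. b l k \<noteq> 0"
proof (rule ccontr)
  assume "\<not> ?thesis"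
  moreover have "b l \<in> zvec n" using B l unfolding lattice_basis_def by blast
  ultimately have zero: "b l k = 0" for k
    unfolding zvec_def by (cases "k < n") auto
  have "lincomb n (\<lambda>i. if i = l then 1 else 0) b k = 0" for k
  proof -
    have "lincomb n (\<lambda>i. if i = l then 1 else 0) b k = (\<Sum>i<n. if i = l then b l k else 0)"
      unfolding lincomb_def by (intro sum.cong) auto
    then show ?thesis using zero by simp
  qed
  then show False using B l unfolding lattice_basis_def by fastforce
qed

section \<open>Signed permutations\<close>

lemma signed_perm_lincomb:
  "signed_perm n p s (lincomb n c b) = lincomb n c (\<lambda>i. signed_perm n p s (b i))"
  unfolding signed_perm_def lincomb_def by (auto simp: sum_distrib_left algebra_simps)

lemma signed_perm_eq_zero:
  assumes sp: "is_signed_perm n p s" and v: "v \<in> zvec n"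
    and zero: "signed_perm n p s v = (\<lambda>_. 0)"
  shows "v = (\<lambda>_. 0)"
proof
  fix k
  show "v k = 0"
  proof (cases "k < n")
    case True
    then obtain i where i: "i < n" "p i = k"
      using sp permutes_image unfolding is_signed_perm_def by (metis imageE lessThan_iff)
    then have "s i * v k = 0" using fun_cong[OF zero, of i] unfolding signed_perm_def by simp
    then show ?thesis using sp i(1) unfolding is_signed_perm_def by auto
  qed (use v zvec_def in auto)
qed

lemma lattice_basis_signed_perm:
  assumes B: "lattice_basis n L b" and sp: "is_signed_perm n p s"
  shows "lattice_basis n (signed_perm n p s ` L) (\<lambda>i. signed_perm n p s (b i))"
proof -
  have b: "\<forall>i<n. b i \<in> zvec n" and L: "L = {lincomb n c b | c. True}"
    using B unfolding lattice_basis_def by auto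
  have "\<forall>i<n. c i = 0" if "lincomb n c (\<lambda>i. signed_perm n p s (b i)) = (\<lambda>_. 0)" for c
    using B signed_perm_eq_zero[OF sp lincomb_zvec[OF b]] that
    unfolding lattice_basis_def signed_perm_lincomb by blast
  moreover have "signed_perm n p s ` L = {lincomb n c (\<lambda>i. signed_perm n p s (b i)) | c. True}"
    unfolding L setcompr_eq_image image_image signed_perm_lincomb ..
  moreover have "\<forall>i<n. signed_perm n p s (b i) \<in> zvec n"
    unfolding zvec_def signed_perm_def by auto
  ultimately show ?thesis unfolding lattice_basis_def by blast
qed

lemma lattice_basis_reindex:
  assumes B: "lattice_basis n L b" and \<pi>: "bij_betw \<pi> {..<n} {..<n}"
    and e: "\<forall>i<n. e i = 1 \<or> e i = -1"
  shows "lattice_basis n L (\<lambda>i k. e i * b (\<pi> i) k)"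
proof -
  define b' where "b' = (\<lambda>i k. e i * b (\<pi> i) k)"
  define \<rho> where "\<rho> = inv_into {..<n} \<pi>"
  have \<rho>: "\<rho> (\<pi> i) = i" if "i < n" for i
    using \<pi> bij_betw_inv_into_left that unfolding \<rho>_def by fastforce
  have ee: "e i * e i = 1" if "i < n" for i using e that by auto
  have b: "\<forall>i<n. b i \<in> zvec n" and indep: "\<forall>c. lincomb n c b = (\<lambda>_. 0) \<longrightarrow> (\<forall>i<n. c i = 0)"
    and L: "L = {lincomb n c b | c. True}" using B unfolding lattice_basis_def by auto
  have to_b: "lincomb n c b' = lincomb n (\<lambda>l. c (\<rho> l) * e (\<rho> l)) b" for c
  proof
    fix k
    show "lincomb n c b' k = lincomb n (\<lambda>l. c (\<rho> l) * e (\<rho> l)) b k"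
      unfolding lincomb_def b'_def
      using sum.reindex_bij_betw[OF \<pi>, of "\<lambda>l. c (\<rho> l) * e (\<rho> l) * b l k"] \<rho>
      by (simp add: mult.assoc)
  qed
  have from_b: "lincomb n c b = lincomb n (\<lambda>i. c (\<pi> i) * e i) b'" for c
  proof
    fix k
    have "(\<Sum>i<n. c (\<pi> i) * b (\<pi> i) k) = (\<Sum>i<n. c (\<pi> i) * e i * (e i * b (\<pi> i) k))"
      using ee by (intro sum.cong) (auto simp: algebra_simps)
    then show "lincomb n c b k = lincomb n (\<lambda>i. c (\<pi> i) * e i) b' k"
      unfolding lincomb_def b'_def using sum.reindex_bij_betw[OF \<pi>, of "\<lambda>l. c l * b l k"] by simp
  qed
  have "\<forall>i<n. c i = 0" if "lincomb n c b' = (\<lambda>_. 0)" for c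
  proof (intro allI impI)
    fix i assume "i < n"
    then have "c (\<rho> (\<pi> i)) * e (\<rho> (\<pi> i)) = 0"
      using indep that to_b bij_betwE[OF \<pi>] by (metis lessThan_iff)
    then show "c i = 0" using \<rho> e \<open>i < n\<close> by auto
  qed
  moreover have "L = {lincomb n c b' | c. True}" unfolding L using to_b from_b by blast
  moreover have "\<forall>i<n. b' i \<in> zvec n"
    using b bij_betwE[OF \<pi>] unfolding b'_def zvec_def by auto
  ultimately show ?thesis unfolding lattice_basis_def b'_def by blast
qed

section \<open>Block diagonal matrices\<close>

lemma sum_lessThan_add:
  "(\<Sum>j<a + c. f j) = (\<Sum>j<a. f j) + (\<Sum>j<c. f (a + j :: nat))"
  by (induction c) (auto simp: add.assoc)

lemma length_concat_blocks:
  assumes "\<And>\<beta>. \<beta> \<in> set bl \<Longrightarrow> length (xs \<beta>) = bsize (kind \<beta>)"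
  shows "length (concat (map xs bl)) = sum_list (map bsize (map kind bl))"
  using assms by (induction bl) auto

lemma nth_concat_blocks_mem:
  assumes "\<And>\<beta>. \<beta> \<in> set bl \<Longrightarrow> length (xs \<beta>) = bsize (kind \<beta>)"
    and "q < sum_list (map bsize (map kind bl))"
  shows "\<exists>\<beta>\<in>set bl. concat (map xs bl) ! q \<in> set (xs \<beta>)"
  using nth_mem[of q "concat (map xs bl)"] length_concat_blocks[of bl xs kind] assms by auto

lemma blockdiag_concat:
  fixes M :: "nat \<Rightarrow> nat \<Rightarrow> int"
  assumes "distinct bl"
    and len: "\<And>\<beta>. \<beta> \<in> set bl \<Longrightarrow>
      length (rows \<beta>) = bsize (kind \<beta>) \<and> length (cols \<beta>) = bsize (kind \<beta>)"
    and inside: "\<And>\<beta> a c. \<beta> \<in> set bl \<Longrightarrow> a < bsize (kind \<beta>) \<Longrightarrow> c < bsize (kind \<beta>) \<Longrightarrow>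
      M (rows \<beta> ! a) (cols \<beta> ! c) = bentry (kind \<beta>) a c"
    and outside: "\<And>\<beta> \<gamma> i j. \<beta> \<in> set bl \<Longrightarrow> \<gamma> \<in> set bl \<Longrightarrow> \<beta> \<noteq> \<gamma> \<Longrightarrow>
      i \<in> set (rows \<beta>) \<Longrightarrow> j \<in> set (cols \<gamma>) \<Longrightarrow> M i j = 0"
    and "q < sum_list (map bsize (map kind bl))" "r < sum_list (map bsize (map kind bl))"
  shows "M (concat (map rows bl) ! q) (concat (map cols bl) ! r) = blockdiag (map kind bl) q r"
  using assms
proof (induction bl arbitrary: q r)
  case (Cons \<beta> bl)
  let ?s = "bsize (kind \<beta>)" and ?R = "concat (map rows bl)" and ?C = "concat (map cols bl)"
  have lenR: "length (rows \<beta>) = ?s" and lenC: "length (cols \<beta>) = ?s"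
    using Cons.prems(2) by auto
  have notin: "\<beta> \<notin> set bl" using Cons.prems(1) by simp
  have row_out: "M (rows \<beta> ! q) (?C ! (r - ?s)) = 0" if "q < ?s" "?s \<le> r"
  proof -
    have "r - ?s < sum_list (map bsize (map kind bl))" using Cons.prems(6) that by simp
    then obtain \<gamma> where "\<gamma> \<in> set bl" "?C ! (r - ?s) \<in> set (cols \<gamma>)"
      using nth_concat_blocks_mem[of bl cols kind "r - ?s"] Cons.prems(2) by auto
    moreover have "rows \<beta> ! q \<in> set (rows \<beta>)" using lenR that by simp
    ultimately show ?thesis using Cons.prems(4)[of \<beta> \<gamma>] notin by auto
  qed
  have col_out: "M (?R ! (q - ?s)) (cols \<beta> ! r) = 0" if "?s \<le> q" "r < ?s"
  proof -
    have "q - ?s < sum_list (map bsize (map kind bl))" using Cons.prems(5) that by simp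
    then obtain \<gamma> where "\<gamma> \<in> set bl" "?R ! (q - ?s) \<in> set (rows \<gamma>)"
      using nth_concat_blocks_mem[of bl rows kind "q - ?s"] Cons.prems(2) by auto
    moreover have "cols \<beta> ! r \<in> set (cols \<beta>)" using lenC that by simp
    ultimately show ?thesis using Cons.prems(4)[of \<gamma> \<beta>] notin by auto
  qed
  have IH: "M (?R ! (q - ?s)) (?C ! (r - ?s)) = blockdiag (map kind bl) (q - ?s) (r - ?s)"
    if "?s \<le> q" "?s \<le> r"
    by (rule Cons.IH) (use Cons.prems that in \<open>auto intro: Cons.prems(4)\<close>)
  show ?case
    using Cons.prems(3)[of \<beta> q r] row_out col_out IH
    by (auto simp: nth_append lenR lenC not_less)
qed simp

lemma bentry_cube_cover:
  "\<exists>c. \<forall>k<bsize a. (\<Sum>j<bsize a. c j * bentry a k j) - x k \<in> {0, 1}"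
proof (cases a)
  case One
  then show ?thesis by (intro exI[of _ "\<lambda>_. x 0"]) auto
next
  case Two
  then show ?thesis by (intro exI[of _ "\<lambda>_. (x 0 + 1) div 2"]) auto
next
  case Rot
  have "\<exists>u v. u + v = x 1 \<and> (u - v = x 0 \<or> u - v = x 0 + 1)"
    by presburger
  then obtain u v where "u + v = x 1" "u - v = x 0 \<or> u - v = x 0 + 1"
    by blast
  then have "\<forall>k<2. (\<Sum>j<2. (if j = 0 then u else v) * bentry Rot k j) - x k \<in> {0, 1}"
    by (auto simp: numeral_2_eq_2 less_Suc_eq)
  then show ?thesis using Rot by (intro exI) auto
qed

lemma blockdiag_cube_cover:
  "\<exists>c. \<forall>k<sum_list (map bsize bs).
     (\<Sum>j<sum_list (map bsize bs). c j * blockdiag bs k j) - x k \<in> {0, 1}"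
proof (induction bs arbitrary: x)
  case (Cons a bs)
  define s where "s = bsize a"
  define N where "N = sum_list (map bsize bs)"
  obtain c0 where c0: "\<forall>k<s. (\<Sum>j<s. c0 j * bentry a k j) - x k \<in> {0, 1}"
    using bentry_cube_cover unfolding s_def by blast
  obtain c1 where c1: "\<forall>k<N. (\<Sum>j<N. c1 j * blockdiag bs k j) - x (s + k) \<in> {0, 1}"
    using Cons.IH[of "\<lambda>k. x (s + k)"] unfolding N_def by blast
  define c where "c j = (if j < s then c0 j else c1 (j - s))" for j
  have "(\<Sum>j<s + N. c j * blockdiag (a # bs) k j) - x k \<in> {0, 1}" if k: "k < s + N" for k
  proof (cases "k < s")
    case True
    have "(\<Sum>j<s + N. c j * blockdiag (a # bs) k j) = (\<Sum>j<s. c0 j * bentry a k j)"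
      using True by (simp add: sum_lessThan_add c_def s_def)
    then show ?thesis using c0 True by simp
  next
    case False
    have "(\<Sum>j<s + N. c j * blockdiag (a # bs) k j) = (\<Sum>j<N. c1 j * blockdiag bs (k - s) j)"
      using False by (simp add: sum_lessThan_add c_def s_def)
    then show ?thesis using c1[rule_format, of "k - s"] k False by simp
  qed
  then show ?case unfolding s_def N_def by auto
qed simp

lemma block_basis_cube_cover:
  assumes "lattice_basis n L b" "block_basis n b"
  shows "\<exists>y\<in>L. \<forall>k<n. y k - x k \<in> {0, 1}"
proof -
  obtain bs where n: "sum_list (map bsize bs) = n"
    and b: "\<forall>i<n. \<forall>j<n. b j i = blockdiag bs i j"
    using assms(2) unfolding block_basis_def by blast
  obtain c where c: "\<forall>k<n. (\<Sum>j<n. c j * blockdiag bs k j) - x k \<in> {0, 1}"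
    using blockdiag_cube_cover[of bs x] n by auto
  have "lincomb n c b k = (\<Sum>j<n. c j * blockdiag bs k j)" if "k < n" for k
    unfolding lincomb_def using b that by (intro sum.cong) auto
  moreover have "lincomb n c b \<in> L" using assms(1) unfolding lattice_basis_def by auto
  ultimately show ?thesis using c by (intro bexI[of _ "lincomb n c b"]) auto
qed

text \<open>x' is chosen so that the signed permutation maps the unit cube at x onto the unit cube
  at x'; a sign -1 reverses a coordinate, hence the shift by one.\<close>
lemma cube_cover_of_signed_perm_image:
  assumes sp: "is_signed_perm n p s"
    and cover: "\<And>x'. \<exists>y'\<in>signed_perm n p s ` L. \<forall>k<n. y' k - x' k \<in> {0, 1}"
  shows "\<exists>y\<in>L. \<forall>k<n. y k - x k \<in> {0, 1}"
proof -
  have p: "p permutes {..<n}" and s: "\<forall>i<n. s i = 1 \<or> s i = -1"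
    using sp unfolding is_signed_perm_def by auto
  define x' where "x' i = s i * x (p i) - (if s i = -1 then 1 else 0)" for i
  obtain y where y: "y \<in> L" "\<forall>i<n. signed_perm n p s y i - x' i \<in> {0, 1}"
    using cover[of x'] by blast
  have "y (p i) - x (p i) \<in> {0, 1}" if "i < n" for i
    using y(2) s that unfolding signed_perm_def x'_def by force
  moreover have "\<exists>i<n. p i = k" if "k < n" for k
    using permutes_image[OF p] that by (metis imageE lessThan_iff)
  ultimately show ?thesis using y(1) by metis
qed

lemma cubiquitous_if_block_basis:
  assumes "full_rank_sublattice n L" "is_signed_perm n p s"
    and "lattice_basis n (signed_perm n p s ` L) b" "block_basis n b"
  shows "cubiquitous n L"
  using assms cube_cover_of_signed_perm_image block_basis_cube_cover
  unfolding cubiquitous_def by blast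

section \<open>Linear forms on the unit cube\<close>

lemma dvd_imp_eq_0_or_self: "(m::int) dvd d \<Longrightarrow> 0 \<le> d \<Longrightarrow> d \<le> m \<Longrightarrow> d = 0 \<or> d = m"
  using zdvd_imp_le[of m d] by (cases "d = 0") auto

definition neg_part_sum :: "nat \<Rightarrow> (nat \<Rightarrow> int) \<Rightarrow> int" where
  "neg_part_sum n v = (\<Sum>k<n. if v k < 0 then - v k else 0)"

definition pos_part_sum :: "nat \<Rightarrow> (nat \<Rightarrow> int) \<Rightarrow> int" where
  "pos_part_sum n v = (\<Sum>k<n. if v k > 0 then v k else 0)"

lemma neg_plus_pos_part_sum: "neg_part_sum n v + pos_part_sum n v = (\<Sum>k<n. \<bar>v k\<bar>)"
  unfolding neg_part_sum_def pos_part_sum_def sum.distrib[symmetric] by (intro sum.cong) auto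

lemma cube_dot_bounds:
  assumes "\<forall>k<n. c k \<in> {0, 1}"
  shows "- neg_part_sum n v \<le> dot n c v" "dot n c v \<le> pos_part_sum n v"
proof -
  have "(\<Sum>k<n. - (if v k < 0 then - v k else 0)) \<le> (\<Sum>k<n. c k * v k)"
    using assms by (intro sum_mono) auto
  then show "- neg_part_sum n v \<le> dot n c v"
    unfolding neg_part_sum_def dot_def by (simp add: sum_negf)
  show "dot n c v \<le> pos_part_sum n v"
    unfolding pos_part_sum_def dot_def using assms by (intro sum_mono) auto
qed

lemma cube_dot_extreme:
  assumes v: "\<forall>k<n. \<bar>v k\<bar> \<le> 1" and c: "\<forall>k<n. c k \<in> {0, 1}"
    and "dot n c v = - neg_part_sum n v \<or> dot n c v = pos_part_sum n v"
  shows "\<exists>e. (e = 1 \<or> e = -1) \<and> (\<forall>k<n. v k \<noteq> 0 \<longrightarrow> 2 * c k - 1 = e * v k)"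
proof -
  have unit: "v k = 1 \<or> v k = -1" "c k = 0 \<or> c k = 1" if "k < n" "v k \<noteq> 0" for k
    using v c that by force+
  show ?thesis
    using assms(3)
  proof
    assume "dot n c v = - neg_part_sum n v"
    define g where "g k = c k * v k + (if v k < 0 then - v k else 0)" for k
    have "sum g {..<n} = 0"
      using \<open>dot n c v = - neg_part_sum n v\<close>
      unfolding g_def sum.distrib dot_def neg_part_sum_def by simp
    moreover have "\<forall>k\<in>{..<n}. 0 \<le> g k" using c unfolding g_def by auto
    ultimately have "\<forall>k<n. g k = 0" using sum_nonneg_eq_0_iff[of "{..<n}" g] by auto
    then have "\<forall>k<n. v k \<noteq> 0 \<longrightarrow> 2 * c k - 1 = (-1) * v k"
      using unit unfolding g_def by fastforce
    then show ?thesis by blast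
  next
    assume "dot n c v = pos_part_sum n v"
    define g where "g k = (if v k > 0 then v k else 0) - c k * v k" for k
    have "sum g {..<n} = 0"
      using \<open>dot n c v = pos_part_sum n v\<close>
      unfolding g_def sum_subtractf dot_def pos_part_sum_def by simp
    moreover have "\<forall>k\<in>{..<n}. 0 \<le> g k" using c unfolding g_def by auto
    ultimately have "\<forall>k<n. g k = 0" using sum_nonneg_eq_0_iff[of "{..<n}" g] by auto
    then have "\<forall>k<n. v k \<noteq> 0 \<longrightarrow> 2 * c k - 1 = 1 * v k"
      using unit unfolding g_def by fastforce
    then show ?thesis by blast
  qed
qed

lemma ternary_or_double_axis_of_bound:
  fixes v :: "nat \<Rightarrow> int"
  assumes bound: "\<And>j. j < n \<Longrightarrow> v j \<noteq> 0 \<Longrightarrow> (\<Sum>k<n. v k * v k - \<bar>v k\<bar>) \<le> \<bar>v j\<bar>"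
  shows "(\<forall>k<n. \<bar>v k\<bar> \<le> 1) \<or> (\<exists>j<n. \<bar>v j\<bar> = 2 \<and> (\<forall>k<n. k \<noteq> j \<longrightarrow> v k = 0))"
proof -
  define f where "f k = \<bar>v k\<bar> * \<bar>v k\<bar> - \<bar>v k\<bar>" for k
  have f_nonneg: "0 \<le> f k" for k
  proof (cases "v k = 0")
    case False
    then have "\<bar>v k\<bar> * 1 \<le> \<bar>v k\<bar> * \<bar>v k\<bar>" by (intro mult_left_mono) auto
    then show ?thesis unfolding f_def by simp
  qed (simp add: f_def)
  have sum_f: "(\<Sum>k<n. v k * v k - \<bar>v k\<bar>) = sum f {..<n}"
    unfolding f_def by simp
  have f_pair: "f k + f j \<le> \<bar>v j\<bar>" if "j < n" "k < n" "k \<noteq> j" "v j \<noteq> 0" for j k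
  proof -
    have "f k + f j = sum f {k, j}" using that(3) by simp
    also have "\<dots> \<le> sum f {..<n}" using that f_nonneg by (intro sum_mono2) auto
    finally show ?thesis using bound[OF that(1,4)] sum_f by simp
  qed
  have le2: "\<bar>v j\<bar> \<le> 2" if "j < n" for j
  proof (cases "v j = 0")
    case False
    have "f j \<le> \<bar>v j\<bar>"
      using bound[OF that False] member_le_sum[of j "{..<n}" f] f_nonneg that sum_f by simp
    then have "\<bar>v j\<bar> * \<bar>v j\<bar> \<le> 2 * \<bar>v j\<bar>" unfolding f_def by linarith
    then show ?thesis using False by (metis mult_le_cancel_right_pos zero_less_abs_iff)
  qed simp
  show ?thesis
  proof (cases "\<exists>j<n. \<bar>v j\<bar> = 2")
    case True
    then obtain j where j: "j < n" "\<bar>v j\<bar> = 2" by blast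
    have "v k = 0" if "k < n" "k \<noteq> j" for k
    proof (rule ccontr)
      assume "v k \<noteq> 0"
      then have "f j + f k \<le> \<bar>v k\<bar>" using f_pair[of k j] that j(1) by simp
      moreover have "f j = 2" using j(2) unfolding f_def by simp
      ultimately show False using le2[OF that(1)] f_nonneg[of k] \<open>v k \<noteq> 0\<close>
        unfolding f_def by (smt (verit) mult_le_cancel_left2 zero_less_abs_iff)
    qed
    then show ?thesis using j by blast
  qed (use le2 in force)
qed

section \<open>Orthogonal bases of cubiquitous lattices\<close>

locale cubiquitous_orthogonal_basis =
  fixes n :: nat and L :: "(nat \<Rightarrow> int) set" and b :: "nat \<Rightarrow> nat \<Rightarrow> int"
  assumes basis: "lattice_basis n L b"
    and orthogonal: "\<And>i j. i < n \<Longrightarrow> j < n \<Longrightarrow> i \<noteq> j \<Longrightarrow> dot n (b i) (b j) = 0"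
    and cube_cover: "\<And>x. x \<in> zvec n \<Longrightarrow> \<exists>y\<in>L. \<forall>i<n. y i - x i \<in> {0, 1}"
begin

definition sqnorm :: "nat \<Rightarrow> int" where
  "sqnorm l = dot n (b l) (b l)"

definition supp :: "nat \<Rightarrow> nat set" where
  "supp l = {k. k < n \<and> b l k \<noteq> 0}"

definition row_supp :: "nat \<Rightarrow> nat set" where
  "row_supp j = {l. l < n \<and> b l j \<noteq> 0}"

definition ternary :: "nat \<Rightarrow> bool" where
  "ternary l \<longleftrightarrow> (\<forall>k<n. \<bar>b l k\<bar> \<le> 1)"

lemma L_eq_span: "L = {lincomb n c b | c. True}"
  using basis unfolding lattice_basis_def by blast

lemma finite_supp: "finite (supp l)"
  unfolding supp_def by simp

lemma supp_nonempty: "l < n \<Longrightarrow> supp l \<noteq> {}"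
  using lattice_basis_nonzero[OF basis] unfolding supp_def by blast

lemma finite_row_supp: "finite (row_supp j)"
  unfolding row_supp_def by simp

lemma dot_lincomb_basis: "l < n \<Longrightarrow> dot n (lincomb n c b) (b l) = c l * sqnorm l"
  unfolding dot_lincomb_left sqnorm_def
  by (subst sum.mono_neutral_right[of "{..<n}" "{l}"]) (auto simp: orthogonal)

lemma sqnorm_dvd_dot: "y \<in> L \<Longrightarrow> l < n \<Longrightarrow> sqnorm l dvd dot n y (b l)"
  using dot_lincomb_basis L_eq_span by auto

lemma sqnorm_eq: "sqnorm l = (\<Sum>k<n. b l k * b l k)"
  unfolding sqnorm_def dot_def ..

lemma ternary_entry: "ternary l \<Longrightarrow> k < n \<Longrightarrow> b l k \<noteq> 0 \<Longrightarrow> b l k = 1 \<or> b l k = -1"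
  unfolding ternary_def by force

lemma ternary_supp_entry: "ternary l \<Longrightarrow> k \<in> supp l \<Longrightarrow> b l k = 1 \<or> b l k = -1"
  unfolding supp_def using ternary_entry by blast

lemma sqnorm_ternary: "ternary l \<Longrightarrow> sqnorm l = neg_part_sum n (b l) + pos_part_sum n (b l)"
  unfolding neg_plus_pos_part_sum sqnorm_eq
  by (intro sum.cong) (auto dest: ternary_entry)

lemma sqnorm_ternary_card: "ternary l \<Longrightarrow> sqnorm l = int (card (supp l))"
proof -
  assume l: "ternary l"
  have "sqnorm l = (\<Sum>k\<in>supp l. b l k * b l k)"
    unfolding sqnorm_eq supp_def by (intro sum.mono_neutral_right) auto
  also have "\<dots> = (\<Sum>k\<in>supp l. 1)"
  proof (intro sum.cong refl)
    fix k assume "k \<in> supp l"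
    then have "b l k = 1 \<or> b l k = -1" using ternary_entry[OF l] unfolding supp_def by blast
    then show "b l k * b l k = 1" by auto
  qed
  finally show ?thesis by simp
qed

text \<open>Pigeonhole on the corners of the unit cubes at the points t e_j, t = 0, 1, 2, ...:
  two of these cubes meet L in the same corner pattern.\<close>
lemma axis_multiple_mem:
  assumes j: "j < n"
  shows "\<exists>k>0. axis j k \<in> L"
proof -
  have "\<forall>t::nat. \<exists>y\<in>L. \<forall>i<n. y i - axis j (int t) i \<in> {0, 1}"
    using cube_cover axis_zvec[OF j] by blast
  then obtain Y where Y: "\<And>t. Y t \<in> L" "\<And>t i. i < n \<Longrightarrow> Y t i - axis j (int t) i \<in> {0, 1}"
    by metis
  define D where "D t = {i. i < n \<and> Y t i - axis j (int t) i = 1}" for t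
  have "range D \<subseteq> Pow {..<n}" unfolding D_def by auto
  then have "finite (range D)" using finite_subset by blast
  then have "\<not> inj D" using finite_imageD infinite_UNIV_nat by blast
  then obtain u v where "u \<noteq> v" "D u = D v" unfolding inj_def by blast
  then obtain t1 t2 where t: "t1 < t2" "D t1 = D t2" by (metis linorder_neqE_nat)
  have Y_zvec: "Y t \<in> zvec n" for t
    using Y(1) lattice_basis_subset_zvec[OF basis] by blast
  have "(\<lambda>i. Y t2 i - Y t1 i) = axis j (int t2 - int t1)"
  proof
    fix i
    show "Y t2 i - Y t1 i = axis j (int t2 - int t1) i"
    proof (cases "i < n")
      case True
      have "Y t1 i - axis j (int t1) i = 1 \<longleftrightarrow> Y t2 i - axis j (int t2) i = 1"
        using arg_cong[OF t(2), of "\<lambda>A. i \<in> A"] True unfolding D_def by simp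
      then show ?thesis using Y(2)[OF True, of t1] Y(2)[OF True, of t2] unfolding axis_def by auto
    next
      case False
      then show ?thesis using Y_zvec j unfolding zvec_def axis_def by simp
    qed
  qed
  then have "axis j (int t2 - int t1) \<in> L"
    using lattice_basis_diff_mem[OF basis Y(1)[of t2] Y(1)[of t1]] by simp
  then show ?thesis using t(1) by (intro exI[of _ "int t2 - int t1"]) auto
qed

lemma axis_multiple_coeffs:
  assumes j: "j < n"
  shows "\<exists>k>0. \<exists>c. (\<forall>l<n. c l * sqnorm l = k * b l j) \<and> (\<Sum>l<n. c l * b l j) = k"
proof -
  obtain k where k: "k > 0" "axis j k \<in> L" using axis_multiple_mem[OF j] by blast
  then obtain c where c: "axis j k = lincomb n c b" using L_eq_span by blast
  have "c l * sqnorm l = k * b l j" if "l < n" for l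
    using dot_lincomb_basis[OF that, of c] dot_axis_left[OF j, of k "b l"] c by simp
  moreover have "(\<Sum>l<n. c l * b l j) = k"
    using fun_cong[OF c, of j] unfolding axis_def lincomb_def by simp
  ultimately show ?thesis using k(1) by blast
qed

lemma row_supp_nonempty:
  assumes j: "j < n"
  shows "row_supp j \<noteq> {}"
proof
  assume "row_supp j = {}"
  then have "\<forall>l<n. b l j = 0" unfolding row_supp_def by auto
  then show False using axis_multiple_coeffs[OF j] by auto
qed

text \<open>Take x = q sgn(b l j) e_j with <x, b l> the first multiple of |b l j| above
  neg_part_sum n (b l): the cube at x contains a lattice point y with 0 < <y, b l>, and
  <y, b l> is a multiple of sqnorm l, which bounds sqnorm l from above.\<close>
lemma sqnorm_le_abs_sum:
  assumes l: "l < n" and j: "j \<in> supp l"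
  shows "sqnorm l \<le> neg_part_sum n (b l) + pos_part_sum n (b l) + \<bar>b l j\<bar>"
proof (rule ccontr)
  assume big: "\<not> ?thesis"
  define N where "N = neg_part_sum n (b l)"
  define a where "a = \<bar>b l j\<bar>"
  have j': "j < n" "b l j \<noteq> 0" using j unfolding supp_def by auto
  then have a: "a > 0" unfolding a_def by simp
  define q where "q = N div a + 1"
  have "q * a = a * (N div a) + a" unfolding q_def by (simp add: algebra_simps)
  then have qa: "N < q * a" "q * a \<le> N + a"
    using mult_div_mod_eq[of a N] pos_mod_sign[OF a, of N] pos_mod_bound[OF a, of N] by linarith+
  define x where "x = axis j (q * sgn (b l j))"
  have dx: "dot n x (b l) = q * a"
    unfolding x_def dot_axis_left[OF j'(1)] a_def by (simp add: abs_sgn mult.assoc)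
  obtain y where y: "y \<in> L" "\<forall>i<n. y i - x i \<in> {0, 1}"
    using cube_cover axis_zvec[OF j'(1)] unfolding x_def by blast
  have "- N \<le> dot n (\<lambda>k. y k - x k) (b l)" "dot n (\<lambda>k. y k - x k) (b l) \<le> pos_part_sum n (b l)"
    using cube_dot_bounds[of n "\<lambda>k. y k - x k"] y(2) unfolding N_def by auto
  then have "0 < dot n y (b l)" "dot n y (b l) < sqnorm l"
    using dx qa big unfolding dot_diff_left N_def a_def by linarith+
  then show False
    using dvd_imp_eq_0_or_self[OF sqnorm_dvd_dot[OF y(1) l]] by linarith
qed

lemma ternary_or_double_axis:
  assumes l: "l < n"
  shows "ternary l \<or> (\<exists>j. supp l = {j} \<and> \<bar>b l j\<bar> = 2)"
proof -
  have "(\<forall>k<n. \<bar>b l k\<bar> \<le> 1) \<or> (\<exists>j<n. \<bar>b l j\<bar> = 2 \<and> (\<forall>k<n. k \<noteq> j \<longrightarrow> b l k = 0))"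
  proof (rule ternary_or_double_axis_of_bound)
    fix j assume "j < n" "b l j \<noteq> 0"
    then have "sqnorm l \<le> neg_part_sum n (b l) + pos_part_sum n (b l) + \<bar>b l j\<bar>"
      using sqnorm_le_abs_sum[OF l] unfolding supp_def by blast
    then show "(\<Sum>k<n. b l k * b l k - \<bar>b l k\<bar>) \<le> \<bar>b l j\<bar>"
      unfolding sum_subtractf sqnorm_eq[symmetric] neg_plus_pos_part_sum[symmetric] by simp
  qed
  moreover have "supp l = {j}" if "j < n" "\<bar>b l j\<bar> = 2" "\<forall>k<n. k \<noteq> j \<longrightarrow> b l k = 0" for j
    using that unfolding supp_def by auto
  ultimately show ?thesis unfolding ternary_def by blast
qed

text \<open>A lattice point in the cube at x realises a corner of the cube that is extreme for both
  b l1 and b l2; on a common coordinate of their supports the two corners agree, so the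
  products b l1 k * b l2 k there all have the same sign, against orthogonality.\<close>
lemma tight_point_disjoint_supports:
  assumes l: "l1 < n" "l2 < n" "l1 \<noteq> l2" and t: "ternary l1" "ternary l2"
    and x: "x \<in> zvec n" "dot n x (b l1) = neg_part_sum n (b l1)"
      "dot n x (b l2) = neg_part_sum n (b l2)"
  shows "supp l1 \<inter> supp l2 = {}"
proof -
  obtain y where y: "y \<in> L" "\<forall>i<n. y i - x i \<in> {0, 1}" using cube_cover x(1) by blast
  define c where "c i = y i - x i" for i
  have corner: "\<exists>e. (e = 1 \<or> e = -1) \<and> (\<forall>k<n. b l k \<noteq> 0 \<longrightarrow> 2 * c k - 1 = e * b l k)"
    if l: "l < n" "ternary l" "dot n x (b l) = neg_part_sum n (b l)" for l
  proof (rule cube_dot_extreme)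
    show "\<forall>k<n. \<bar>b l k\<bar> \<le> 1" using l(2) unfolding ternary_def .
    show c01: "\<forall>k<n. c k \<in> {0, 1}" using y(2) unfolding c_def .
    have dy: "dot n y (b l) = neg_part_sum n (b l) + dot n c (b l)"
      using l(3) unfolding c_def dot_diff_left by simp
    have "0 \<le> dot n y (b l)" "dot n y (b l) \<le> sqnorm l"
      using dy cube_dot_bounds[OF c01, of "b l"] sqnorm_ternary[OF l(2)] by linarith+
    then have "dot n y (b l) = 0 \<or> dot n y (b l) = sqnorm l"
      using dvd_imp_eq_0_or_self[OF sqnorm_dvd_dot[OF y(1) l(1)]] by blast
    then show "dot n c (b l) = - neg_part_sum n (b l) \<or> dot n c (b l) = pos_part_sum n (b l)"
      using dy sqnorm_ternary[OF l(2)] by auto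
  qed
  obtain e1 where e1: "e1 = 1 \<or> e1 = -1" "\<forall>k<n. b l1 k \<noteq> 0 \<longrightarrow> 2 * c k - 1 = e1 * b l1 k"
    using corner[OF l(1) t(1) x(2)] by blast
  obtain e2 where e2: "e2 = 1 \<or> e2 = -1" "\<forall>k<n. b l2 k \<noteq> 0 \<longrightarrow> 2 * c k - 1 = e2 * b l2 k"
    using corner[OF l(2) t(2) x(3)] by blast
  have one: "(e1 * b l1 k) * (e2 * b l2 k) = 1" if "k \<in> supp l1 \<inter> supp l2" for k
  proof -
    have "e1 * b l1 k = 2 * c k - 1" "e2 * b l2 k = 2 * c k - 1"
      using e1(2) e2(2) that unfolding supp_def by auto
    moreover have "c k = 0 \<or> c k = 1" using y(2) that unfolding c_def supp_def by auto
    ultimately show ?thesis by auto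
  qed
  have "e1 * e2 * dot n (b l1) (b l2) = (\<Sum>k<n. (e1 * b l1 k) * (e2 * b l2 k))"
    unfolding dot_def sum_distrib_left by (simp add: algebra_simps)
  also have "\<dots> = (\<Sum>k\<in>supp l1 \<inter> supp l2. (e1 * b l1 k) * (e2 * b l2 k))"
    by (rule sum.mono_neutral_right) (auto simp: supp_def)
  also have "\<dots> = int (card (supp l1 \<inter> supp l2))"
    using one by simp
  finally show ?thesis using orthogonal[OF l] finite_supp by simp
qed

lemma ternary_supports_overlap_subset:
  assumes l: "l1 < n" "l2 < n" "l1 \<noteq> l2" and t: "ternary l1" "ternary l2"
    and j: "j \<in> supp l1" "j \<in> supp l2"
  shows "supp l1 \<subseteq> supp l2"
proof
  fix j0 assume j0: "j0 \<in> supp l1"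
  show "j0 \<in> supp l2"
  proof (rule ccontr)
    assume "j0 \<notin> supp l2"
    then have z: "b l2 j0 = 0" using j0 unfolding supp_def by auto
    have jn: "j < n" "j0 < n" using j j0 unfolding supp_def by auto
    have sq: "b l1 j0 * b l1 j0 = 1" "b l2 j * b l2 j = 1"
      using ternary_entry[OF t(1) jn(2)] ternary_entry[OF t(2) jn(1)] j j0
      unfolding supp_def by auto
    define \<alpha> where "\<alpha> = neg_part_sum n (b l2) * b l2 j"
    define \<beta> where "\<beta> = b l1 j0 * (neg_part_sum n (b l1) - \<alpha> * b l1 j)"
    define x where "x k = axis j \<alpha> k + axis j0 \<beta> k" for k
    have "dot n x (b l1) = \<alpha> * b l1 j
        + (b l1 j0 * b l1 j0) * (neg_part_sum n (b l1) - \<alpha> * b l1 j)"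
      unfolding x_def dot_two_axes[OF jn] \<beta>_def by (simp add: algebra_simps)
    then have "dot n x (b l1) = neg_part_sum n (b l1)" using sq(1) by simp
    moreover have "dot n x (b l2) = neg_part_sum n (b l2)"
      unfolding x_def dot_two_axes[OF jn] \<alpha>_def using z sq(2) by (simp add: mult.assoc)
    moreover have "x \<in> zvec n" using jn unfolding x_def axis_def zvec_def by auto
    ultimately show False using tight_point_disjoint_supports[OF l t] j by blast
  qed
qed

lemma ternary_equal_supports_signs:
  assumes l: "l1 < n" "l2 < n" "l1 \<noteq> l2" and t: "ternary l1" "ternary l2"
    and S: "supp l1 = supp l2" and e: "e = 1 \<or> e = -1"
  shows "\<exists>k\<in>supp l1. b l1 k * b l2 k = e"
proof (rule ccontr)
  assume none: "\<not> ?thesis"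
  have other: "b l1 k * b l2 k = - e" if "k \<in> supp l1" for k
    using ternary_supp_entry[OF t(1) that] ternary_supp_entry[OF t(2), of k] that S none e
    by auto
  have "dot n (b l1) (b l2) = (\<Sum>k\<in>supp l1. b l1 k * b l2 k)"
    unfolding dot_def supp_def by (rule sum.mono_neutral_right) auto
  also have "\<dots> = (\<Sum>k\<in>supp l1. - e)" using other by simp
  finally show False
    using orthogonal[OF l] supp_nonempty[OF l(1)] finite_supp e by auto
qed

text \<open>A point supported on two coordinates where b l1 k * b l2 k takes the two signs can
  realise any pair of values of <x, b l1> and <x, b l2> of equal parity.\<close>
lemma ternary_equal_supports_odd:
  assumes l: "l1 < n" "l2 < n" "l1 \<noteq> l2" and t: "ternary l1" "ternary l2"
    and S: "supp l1 = supp l2"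
  shows "odd (neg_part_sum n (b l1) + neg_part_sum n (b l2))"
proof
  assume even: "even (neg_part_sum n (b l1) + neg_part_sum n (b l2))"
  obtain ja jb where ja: "ja \<in> supp l1" "b l1 ja * b l2 ja = 1"
    and jb: "jb \<in> supp l1" "b l1 jb * b l2 jb = -1"
    using ternary_equal_supports_signs[OF l t S] by blast
  have jn: "ja < n" "jb < n" using ja jb unfolding supp_def by auto
  have sq: "b l1 ja * b l1 ja = 1" "b l1 jb * b l1 jb = 1"
    using ternary_supp_entry[OF t(1) ja(1)] ternary_supp_entry[OF t(1) jb(1)] by auto
  define u where "u = (neg_part_sum n (b l1) + neg_part_sum n (b l2)) div 2"
  define v where "v = neg_part_sum n (b l1) - u"
  have uv: "u + v = neg_part_sum n (b l1)" "u - v = neg_part_sum n (b l2)"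
    using even unfolding u_def v_def by presburger+
  define x where "x k = axis ja (u * b l1 ja) k + axis jb (v * b l1 jb) k" for k
  have "dot n x (b l1) = u * (b l1 ja * b l1 ja) + v * (b l1 jb * b l1 jb)"
    unfolding x_def dot_two_axes[OF jn] by (simp add: algebra_simps)
  then have "dot n x (b l1) = neg_part_sum n (b l1)" using sq uv by simp
  moreover have "dot n x (b l2) = u * (b l1 ja * b l2 ja) + v * (b l1 jb * b l2 jb)"
    unfolding x_def dot_two_axes[OF jn] by (simp add: algebra_simps)
  then have "dot n x (b l2) = neg_part_sum n (b l2)" using ja jb uv by simp
  moreover have "x \<in> zvec n" using jn unfolding x_def axis_def zvec_def by auto
  ultimately show False using tight_point_disjoint_supports[OF l t] S supp_nonempty[OF l(1)]
    by blast
qed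

lemma double_axis_row_supp:
  assumes l: "l < n" "\<not> ternary l" and l': "l' < n" and j: "j \<in> supp l" "j \<in> supp l'"
  shows "l' = l"
proof (rule ccontr)
  assume ne: "l' \<noteq> l"
  have "supp l = {j}" using ternary_or_double_axis[OF l(1)] l(2) j(1) by auto
  then have "dot n (b l) (b l') = b l j * b l' j"
    using j unfolding supp_def by (intro dot_eq_single) auto
  then show False using orthogonal[OF l(1) l' ne[symmetric]] j unfolding supp_def by simp
qed

lemma overlapping_supports:
  assumes l: "l < n" "l' < n" and j: "j \<in> supp l" "j \<in> supp l'"
  shows "l = l' \<or> (ternary l \<and> ternary l' \<and> supp l = supp l')"
proof (cases "l = l'")
  case False
  then have t: "ternary l" "ternary l'"
    using double_axis_row_supp l j by metis+
  then have "supp l = supp l'"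
    using ternary_supports_overlap_subset[OF l False t j]
      ternary_supports_overlap_subset[OF l(2,1) _ t(2,1) j(2,1)] False by blast
  then show ?thesis using t by blast
qed simp

lemma row_supp_eq:
  assumes l: "l < n" and j: "j \<in> supp l"
  shows "row_supp j = {l'. l' < n \<and> supp l' = supp l}"
  using overlapping_supports[OF l _ j] j unfolding row_supp_def supp_def by blast

lemma card_row_supp_le_2:
  assumes j: "j < n"
  shows "card (row_supp j) \<le> 2"
proof (rule ccontr)
  assume "\<not> ?thesis"
  then obtain T where "T \<subseteq> row_supp j" "card T = 3"
    using obtain_subset_with_card_n[of 3 "row_supp j"] by auto
  then obtain l0 l1 l2 where T: "{l0, l1, l2} \<subseteq> row_supp j" "l0 \<noteq> l1" "l1 \<noteq> l2" "l0 \<noteq> l2"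
    unfolding card_3_iff by auto
  have odd: "odd (neg_part_sum n (b l) + neg_part_sum n (b l'))"
    if "l \<in> {l0, l1, l2}" "l' \<in> {l0, l1, l2}" "l \<noteq> l'" for l l'
  proof -
    have ln: "l < n" "l' < n" "j \<in> supp l" "j \<in> supp l'"
      using that T(1) j unfolding row_supp_def supp_def by auto
    then have "ternary l" "ternary l'" "supp l = supp l'"
      using overlapping_supports[OF ln] that(3) by auto
    then show ?thesis using ternary_equal_supports_odd[OF ln(1,2) that(3)] by blast
  qed
  let ?N = "\<lambda>l. neg_part_sum n (b l)"
  have "even (?N l0 + ?N l1) \<or> even (?N l0 + ?N l2) \<or> even (?N l1 + ?N l2)"
    by auto
  then show False using odd[of l0 l1] odd[of l0 l2] odd[of l1 l2] T(2-4) by blast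
qed

text \<open>Some k e_j lies in L; in its coordinates c with respect to the basis, each vector l'
  meeting coordinate j contributes c l' * b l' j = k / card (supp l) to k.\<close>
lemma card_row_supp_ternary:
  assumes l: "l < n" "ternary l" and j: "j \<in> supp l"
  shows "card (row_supp j) = card (supp l)"
proof -
  define m where "m = card (supp l)"
  have jn: "j < n" using j unfolding supp_def by simp
  obtain k c where k: "k > 0" and c: "\<forall>l<n. c l * sqnorm l = k * b l j" "(\<Sum>l<n. c l * b l j) = k"
    using axis_multiple_coeffs[OF jn] by blast
  have m_coeff: "int m * (c l' * b l' j) = k" if "l' \<in> row_supp j" for l'
  proof -
    have l'n: "l' < n" "j \<in> supp l'" using that jn unfolding row_supp_def supp_def by auto
    then have l': "l' < n" "ternary l'" "supp l' = supp l"
      using overlapping_supports[OF l(1) l'n(1) j l'n(2)] l(2) by auto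
    have "sqnorm l' = int m" using sqnorm_ternary_card[OF l'(2)] l'(3) unfolding m_def by simp
    then have "int m * (c l' * b l' j) = (c l' * sqnorm l') * b l' j" by (simp add: algebra_simps)
    then have "int m * (c l' * b l' j) = k * (b l' j * b l' j)" using c(1) l'(1) by simp
    moreover have "b l' j = 1 \<or> b l' j = -1"
      using ternary_entry[OF l'(2) jn] that unfolding row_supp_def by auto
    ultimately show ?thesis by auto
  qed
  have "int m * k = (\<Sum>l'<n. int m * (c l' * b l' j))"
    unfolding c(2)[symmetric] sum_distrib_left ..
  also have "\<dots> = (\<Sum>l'\<in>row_supp j. int m * (c l' * b l' j))"
    by (rule sum.mono_neutral_right) (auto simp: row_supp_def)
  also have "\<dots> = int (card (row_supp j)) * k"
    using m_coeff by simp
  finally have "int m * k = int (card (row_supp j)) * k" .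
  then show ?thesis using k unfolding m_def by simp
qed

lemma card_row_supp:
  assumes l: "l < n" and j: "j \<in> supp l"
  shows "card (row_supp j) = card (supp l)"
proof (cases "ternary l")
  case True
  then show ?thesis using card_row_supp_ternary l j by blast
next
  case False
  have "row_supp j = {l}"
  proof
    show "row_supp j \<subseteq> {l}"
      using double_axis_row_supp[OF l False _ j] j unfolding row_supp_def supp_def by auto
    show "{l} \<subseteq> row_supp j" using l j unfolding row_supp_def supp_def by auto
  qed
  moreover have "supp l = {j}" using ternary_or_double_axis[OF l] False j by auto
  ultimately show ?thesis by simp
qed

lemma card_supp_cases:
  assumes l: "l < n"
  shows "card (supp l) = 1 \<or> card (supp l) = 2 \<and> ternary l"
proof -
  obtain j where j: "j \<in> supp l" using supp_nonempty[OF l] by blast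
  have "j < n" using j unfolding supp_def by simp
  then have "card (supp l) \<le> 2" using card_row_supp[OF l j] card_row_supp_le_2[of j] by linarith
  moreover have "0 < card (supp l)" using j finite_supp card_gt_0_iff by blast
  moreover have "card (supp l) = 1" if "\<not> ternary l"
    using ternary_or_double_axis[OF l] that by auto
  ultimately show ?thesis by linarith
qed

end

section \<open>Normal form of the basis\<close>

lemma card_2_ordered: "card (S::nat set) = 2 \<Longrightarrow> \<exists>x y. x < y \<and> S = {x, y}"
  by (metis card_2_iff insert_commute linorder_neqE_nat)

lemma distinct_concat_map:
  assumes "distinct xs" "\<And>x. x \<in> set xs \<Longrightarrow> distinct (f x)"
    and "\<And>x y. x \<in> set xs \<Longrightarrow> y \<in> set xs \<Longrightarrow> x \<noteq> y \<Longrightarrow> set (f x) \<inter> set (f y) = {}"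
  shows "distinct (concat (map f xs))"
  using assms
proof (induction xs)
  case (Cons x xs)
  have "set (f x) \<inter> set (concat (map f xs)) = {}"
    using Cons.prems(1,3) by fastforce
  then show ?case using Cons by auto
qed simp

lemma permutes_nth:
  assumes "distinct xs" "set xs = {..<n}"
  shows "(\<lambda>q. if q < n then xs ! q else q) permutes {..<n}"
proof (rule bij_imp_permutes)
  have "length xs = n" using distinct_card[OF assms(1)] assms(2) by simp
  then have "bij_betw ((!) xs) {..<n} {..<n}"
    using bij_betw_nth[OF assms(1)] assms(2) by simp
  then show "bij_betw (\<lambda>q. if q < n then xs ! q else q) {..<n} {..<n}"
    by (rule bij_betw_cong[THEN iffD1, rotated]) simp
qed simp

text \<open>The entries of the matrix with columns (u0, u1) and (w0, w1) after multiplying row i by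
  u_i and the second column by -(u0 * w0).\<close>
lemma orthogonal_unit_pair:
  fixes u0 u1 w0 w1 :: int
  assumes "u0 = 1 \<or> u0 = -1" "u1 = 1 \<or> u1 = -1" "w0 = 1 \<or> w0 = -1" "w1 = 1 \<or> w1 = -1"
    and "u0 * w0 + u1 * w1 = 0"
  shows "u0 * u0 = 1" "u1 * u1 = 1" "u0 * - (u0 * w0) * w0 = -1" "u1 * - (u0 * w0) * w1 = 1"
  using assms by (elim disjE; simp)+

context cubiquitous_orthogonal_basis
begin

text \<open>Basis vectors with equal supports form a class whose least member is its leader. Each
  class together with its support becomes one diagonal block. Coordinate j is multiplied by the
  sign of the leader's entry at j, and the second member of a two-element class by the sign that
  makes its entry at the first coordinate of the block -1; normalized_entry j l is entry (j, l)
  of the basis matrix after these sign changes.\<close>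

definition supp_class :: "nat \<Rightarrow> nat set" where
  "supp_class l = {l'. l' < n \<and> supp l' = supp l}"

definition is_leader :: "nat \<Rightarrow> bool" where
  "is_leader l \<longleftrightarrow> l < n \<and> Min (supp_class l) = l"

definition block_kind :: "nat \<Rightarrow> blk" where
  "block_kind l = (if card (supp l) = 2 then Rot else if ternary l then One else Two)"

definition coord_sign :: "nat \<Rightarrow> int" where
  "coord_sign j = sgn (b (Min (row_supp j)) j)"

definition vec_sign :: "nat \<Rightarrow> int" where
  "vec_sign l = (if Min (supp_class l) = l then 1
     else - (b (Min (supp_class l)) (Min (supp l)) * b l (Min (supp l))))"

definition normalized_entry :: "nat \<Rightarrow> nat \<Rightarrow> int" where
  "normalized_entry j l = coord_sign j * vec_sign l * b l j"

lemma supp_class_eq_row_supp: "l < n \<Longrightarrow> j \<in> supp l \<Longrightarrow> supp_class l = row_supp j"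
  unfolding supp_class_def using row_supp_eq by simp

lemma finite_supp_class: "finite (supp_class l)"
  unfolding supp_class_def by simp

lemma self_mem_supp_class: "l < n \<Longrightarrow> l \<in> supp_class l"
  unfolding supp_class_def by simp

lemma supp_class_eq_of_mem: "l' \<in> supp_class l \<Longrightarrow> supp_class l' = supp_class l"
  unfolding supp_class_def by auto

lemma card_supp_class:
  assumes l: "l < n"
  shows "card (supp_class l) = card (supp l)"
proof -
  obtain j where "j \<in> supp l" using supp_nonempty[OF l] by blast
  then show ?thesis using supp_class_eq_row_supp[OF l] card_row_supp[OF l] by simp
qed

lemma Min_supp_class_mem: "l < n \<Longrightarrow> Min (supp_class l) \<in> supp_class l"
  using Min_in[OF finite_supp_class] self_mem_supp_class by blast

lemma is_leader_Min_supp_class: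
  assumes l: "l < n"
  shows "is_leader (Min (supp_class l))"
proof -
  have "Min (supp_class l) < n" "supp_class (Min (supp_class l)) = supp_class l"
    using Min_supp_class_mem[OF l] supp_class_eq_of_mem unfolding supp_class_def by auto
  then show ?thesis unfolding is_leader_def by simp
qed

lemma leader_Min_row_supp: "is_leader l \<Longrightarrow> j \<in> supp l \<Longrightarrow> Min (row_supp j) = l"
  using supp_class_eq_row_supp unfolding is_leader_def by force

lemma leader_Min_supp_class: "is_leader l \<Longrightarrow> l' \<in> supp_class l \<Longrightarrow> Min (supp_class l') = l"
  using supp_class_eq_of_mem unfolding is_leader_def by simp

lemma supp_eq_of_mem_supp_class: "l' \<in> supp_class l \<Longrightarrow> supp l' = supp l"
  unfolding supp_class_def by simp

lemma bsize_block_kind: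
  assumes "l < n"
  shows "bsize (block_kind l) = card (supp l)"
  using card_supp_cases[OF assms] unfolding block_kind_def by (cases "ternary l") auto

lemma single_block_entry:
  assumes l: "is_leader l" and card: "card (supp l) = 1"
  shows "\<exists>j. sorted_list_of_set (supp l) = [j] \<and> sorted_list_of_set (supp_class l) = [l] \<and>
    normalized_entry j l = bentry (block_kind l) 0 0"
proof -
  have ln: "l < n" using l unfolding is_leader_def by simp
  obtain j where j: "supp l = {j}" using card by (rule card_1_singletonE)
  obtain l' where "supp_class l = {l'}" using card_supp_class[OF ln] card by (metis card_1_singletonE)
  then have "supp_class l = {l}" using self_mem_supp_class[OF ln] by simp
  moreover have "normalized_entry j l = \<bar>b l j\<bar>"
    using leader_Min_row_supp[OF l] l j
    unfolding normalized_entry_def coord_sign_def vec_sign_def is_leader_def by (simp add: abs_sgn)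
  moreover have "\<bar>b l j\<bar> = bentry (block_kind l) 0 0"
  proof (cases "ternary l")
    case True
    then have "\<bar>b l j\<bar> = 1" using ternary_supp_entry[OF True, of j] j by auto
    then show ?thesis using True card unfolding block_kind_def by simp
  next
    case False
    then show ?thesis
      using ternary_or_double_axis[OF ln] j card unfolding block_kind_def by auto
  qed
  ultimately show ?thesis using j by simp
qed

text \<open>Orthogonality of b l and b l2 on their common two-element support is what makes the
  lower right entry come out as 1.\<close>
lemma pair_block_entries:
  assumes l: "is_leader l" and card: "card (supp l) = 2"
  shows "\<exists>c0 c1 l2. sorted_list_of_set (supp l) = [c0, c1] \<and> sorted_list_of_set (supp_class l) = [l, l2]
    \<and> normalized_entry c0 l = 1 \<and> normalized_entry c1 l = 1
    \<and> normalized_entry c0 l2 = -1 \<and> normalized_entry c1 l2 = 1"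
proof -
  have ln: "l < n" and lmin: "Min (supp_class l) = l" using l unfolding is_leader_def by auto
  obtain c0 c1 where c: "c0 < c1" "supp l = {c0, c1}" using card_2_ordered[OF card] by blast
  have "card (supp_class l) = 2" using card_supp_class[OF ln] card by simp
  then obtain l1 l2 where ls: "l1 < l2" "supp_class l = {l1, l2}" using card_2_ordered by blast
  then have "l1 = l" using lmin by simp
  have "l2 \<in> supp_class l" using ls(2) by simp
  then have l2: "l < l2" "l2 < n" "supp l2 = {c0, c1}"
    using ls(1) c(2) \<open>l1 = l\<close> unfolding supp_class_def by auto
  have t: "ternary l" "ternary l2"
    using card_supp_cases[OF ln] card_supp_cases[OF l2(2)] card l2(3) c(2) by auto
  have units: "b l c0 = 1 \<or> b l c0 = -1" "b l c1 = 1 \<or> b l c1 = -1"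
    "b l2 c0 = 1 \<or> b l2 c0 = -1" "b l2 c1 = 1 \<or> b l2 c1 = -1"
    using ternary_supp_entry[OF t(1)] ternary_supp_entry[OF t(2)] c(2) l2(3) by simp_all
  have "dot n (b l) (b l2) = b l c0 * b l2 c0 + b l c1 * b l2 c1"
    using c unfolding supp_def by (intro dot_eq_pair) auto
  then have orth: "b l c0 * b l2 c0 + b l c1 * b l2 c1 = 0"
    using orthogonal[OF ln l2(2)] l2(1) by simp
  have "coord_sign c0 = sgn (b l c0)" "coord_sign c1 = sgn (b l c1)"
    using leader_Min_row_supp[OF l, of c0] leader_Min_row_supp[OF l, of c1] c(2)
    unfolding coord_sign_def by simp_all
  moreover have "sgn (b l c0) = b l c0" "sgn (b l c1) = b l c1" using units(1,2) by auto
  moreover have "vec_sign l = 1" "vec_sign l2 = - (b l c0 * b l2 c0)"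
    using lmin leader_Min_supp_class[OF l \<open>l2 \<in> supp_class l\<close>] l2 c(1) unfolding vec_sign_def by simp_all
  ultimately have "normalized_entry c0 l = 1" "normalized_entry c1 l = 1"
    "normalized_entry c0 l2 = -1" "normalized_entry c1 l2 = 1"
    using orthogonal_unit_pair[OF units orth] unfolding normalized_entry_def by simp_all
  then show ?thesis using c ls \<open>l1 = l\<close> by auto
qed

lemma leader_block_entries:
  assumes l: "is_leader l" and a: "a < bsize (block_kind l)" and c: "c < bsize (block_kind l)"
  shows "normalized_entry (sorted_list_of_set (supp l) ! a) (sorted_list_of_set (supp_class l) ! c)
    = bentry (block_kind l) a c"
proof -
  have ln: "l < n" using l unfolding is_leader_def by simp
  show ?thesis
  proof (cases "card (supp l) = 2")
    case True
    then obtain c0 c1 l2 where lists: "sorted_list_of_set (supp l) = [c0, c1]"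
      "sorted_list_of_set (supp_class l) = [l, l2]" and entries: "normalized_entry c0 l = 1"
      "normalized_entry c1 l = 1" "normalized_entry c0 l2 = -1" "normalized_entry c1 l2 = 1"
      using pair_block_entries[OF l] by blast
    have "a = 0 \<or> a = 1" "c = 0 \<or> c = 1" "block_kind l = Rot"
      using a c True bsize_block_kind[OF ln] unfolding block_kind_def by auto
    then show ?thesis unfolding lists using entries by (elim disjE) simp_all
  next
    case False
    then have "card (supp l) = 1" using card_supp_cases[OF ln] by auto
    moreover have "a = 0" "c = 0" using a c bsize_block_kind[OF ln] calculation by auto
    ultimately show ?thesis using single_block_entry[OF l] by auto
  qed
qed

lemma leader_blocks_disjoint:
  assumes l: "is_leader l" "is_leader l'" "l \<noteq> l'" and j: "j \<in> supp l" and l'': "l'' \<in> supp_class l'"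
  shows "b l'' j = 0"
proof (rule ccontr)
  assume "b l'' j \<noteq> 0"
  moreover have "l'' < n" "supp l'' = supp l'" using l'' unfolding supp_class_def by auto
  moreover have "l < n" using l(1) unfolding is_leader_def by simp
  ultimately have "supp l = supp l'"
    using overlapping_supports[of l l'' j] j unfolding supp_def by auto
  then have "supp_class l = supp_class l'" unfolding supp_class_def by simp
  then show False using l unfolding is_leader_def by simp
qed

definition leaders :: "nat list" where
  "leaders = sorted_list_of_set {l. is_leader l}"

definition coord_order :: "nat list" where
  "coord_order = concat (map (\<lambda>l. sorted_list_of_set (supp l)) leaders)"

definition vec_order :: "nat list" where
  "vec_order = concat (map (\<lambda>l. sorted_list_of_set (supp_class l)) leaders)"

lemma set_leaders: "set leaders = {l. is_leader l}"
proof -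
  have "{l. is_leader l} \<subseteq> {..<n}" unfolding is_leader_def by auto
  then have "finite {l. is_leader l}" using finite_subset by blast
  then show ?thesis unfolding leaders_def by simp
qed

lemma leader_of_coord:
  assumes "j < n"
  shows "\<exists>l. is_leader l \<and> j \<in> supp l"
proof -
  obtain l where l: "l < n" "j \<in> supp l"
    using row_supp_nonempty[OF assms] unfolding row_supp_def supp_def by (auto simp: assms)
  have "Min (supp_class l) \<in> supp_class l" using Min_supp_class_mem[OF l(1)] .
  then have "j \<in> supp (Min (supp_class l))" using l(2) supp_eq_of_mem_supp_class by simp
  then show ?thesis using is_leader_Min_supp_class[OF l(1)] by blast
qed

lemma set_coord_order: "set coord_order = {..<n}"
proof
  show "set coord_order \<subseteq> {..<n}"
    unfolding coord_order_def by (auto simp: supp_def)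
  show "{..<n} \<subseteq> set coord_order"
    using leader_of_coord finite_supp set_leaders unfolding coord_order_def by fastforce
qed

lemma set_vec_order: "set vec_order = {..<n}"
proof
  show "set vec_order \<subseteq> {..<n}"
    unfolding vec_order_def by (auto simp: supp_class_def)
  show "{..<n} \<subseteq> set vec_order"
  proof
    fix l assume "l \<in> {..<n}"
    then have l: "l < n" by simp
    have "l \<in> set (sorted_list_of_set (supp_class (Min (supp_class l))))"
      using supp_class_eq_of_mem[OF Min_supp_class_mem[OF l]] self_mem_supp_class[OF l] finite_supp_class by simp
    moreover have "Min (supp_class l) \<in> set leaders" using is_leader_Min_supp_class[OF l] set_leaders by simp
    ultimately show "l \<in> set vec_order" unfolding vec_order_def by auto
  qed
qed

lemma distinct_coord_order: "distinct coord_order"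
  unfolding coord_order_def
proof (rule distinct_concat_map)
  fix l l' assume l: "l \<in> set leaders" "l' \<in> set leaders" "l \<noteq> l'"
  then have lead: "is_leader l" "is_leader l'" "l' \<in> supp_class l'"
    using set_leaders self_mem_supp_class unfolding is_leader_def by auto
  have "b l' j = 0" if "j \<in> supp l" for j
    using leader_blocks_disjoint[OF lead(1,2) l(3) that lead(3)] .
  then have "supp l \<inter> supp l' = {}" unfolding supp_def by auto
  then show "set (sorted_list_of_set (supp l)) \<inter> set (sorted_list_of_set (supp l')) = {}"
    using finite_supp by auto
qed (simp_all add: leaders_def)

lemma distinct_vec_order: "distinct vec_order"
  unfolding vec_order_def
proof (rule distinct_concat_map)
  fix l l' assume l: "l \<in> set leaders" "l' \<in> set leaders" "l \<noteq> l'"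
  then have "Min (supp_class l) \<noteq> Min (supp_class l')" using set_leaders unfolding is_leader_def by auto
  have "supp_class l \<inter> supp_class l' = {}"
  proof (rule ccontr)
    assume "supp_class l \<inter> supp_class l' \<noteq> {}"
    then obtain x where "x \<in> supp_class l" "x \<in> supp_class l'" by blast
    then have "supp_class l = supp_class l'" using supp_class_eq_of_mem[of x l] supp_class_eq_of_mem[of x l'] by simp
    then show False using \<open>Min (supp_class l) \<noteq> Min (supp_class l')\<close> by simp
  qed
  then show "set (sorted_list_of_set (supp_class l)) \<inter> set (sorted_list_of_set (supp_class l')) = {}"
    using finite_supp_class by auto
qed (simp_all add: leaders_def)

lemma length_leader_blocks:
  assumes "l \<in> set leaders"
  shows "length (sorted_list_of_set (supp l)) = bsize (block_kind l) \<and>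
    length (sorted_list_of_set (supp_class l)) = bsize (block_kind l)"
proof -
  have "l < n" using assms set_leaders unfolding is_leader_def by auto
  then show ?thesis using bsize_block_kind card_supp_class by simp
qed

lemma sum_bsize_leaders: "sum_list (map bsize (map block_kind leaders)) = n"
proof -
  have "length coord_order = sum_list (map bsize (map block_kind leaders))"
    unfolding coord_order_def by (rule length_concat_blocks) (use length_leader_blocks in blast)
  then show ?thesis using distinct_card[OF distinct_coord_order] set_coord_order by simp
qed

lemma normalized_entries_blockdiag:
  assumes "q < n" "r < n"
  shows "normalized_entry (coord_order ! q) (vec_order ! r) = blockdiag (map block_kind leaders) q r"
  unfolding coord_order_def vec_order_def
proof (rule blockdiag_concat)
  show "distinct leaders" unfolding leaders_def by simp
  show "length (sorted_list_of_set (supp l)) = bsize (block_kind l) \<and>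
    length (sorted_list_of_set (supp_class l)) = bsize (block_kind l)" if "l \<in> set leaders" for l
    using length_leader_blocks[OF that] .
  show "normalized_entry (sorted_list_of_set (supp l) ! a) (sorted_list_of_set (supp_class l) ! c)
    = bentry (block_kind l) a c" if "l \<in> set leaders" "a < bsize (block_kind l)"
      "c < bsize (block_kind l)" for l a c
    using leader_block_entries that set_leaders by simp
  show "normalized_entry i j = 0" if "l \<in> set leaders" "l' \<in> set leaders" "l \<noteq> l'"
    "i \<in> set (sorted_list_of_set (supp l))" "j \<in> set (sorted_list_of_set (supp_class l'))" for l l' i j
    using leader_blocks_disjoint[of l l' i j] that set_leaders finite_supp finite_supp_class
    unfolding normalized_entry_def by simp
qed (use assms sum_bsize_leaders in simp_all)

lemma coord_sign_unit:
  assumes "j < n"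
  shows "coord_sign j = 1 \<or> coord_sign j = -1"
proof -
  have "Min (row_supp j) \<in> row_supp j"
    using Min_in[OF finite_row_supp row_supp_nonempty[OF assms]] .
  then have "b (Min (row_supp j)) j \<noteq> 0" unfolding row_supp_def by simp
  then show ?thesis unfolding coord_sign_def by (simp add: sgn_if)
qed

lemma vec_sign_unit:
  assumes l: "l < n"
  shows "vec_sign l = 1 \<or> vec_sign l = -1"
proof (cases "Min (supp_class l) = l")
  case False
  define m where "m = Min (supp_class l)"
  define j where "j = Min (supp l)"
  have m: "m < n" "supp m = supp l" using Min_supp_class_mem[OF l] unfolding m_def supp_class_def by auto
  have j: "j \<in> supp l" using Min_in[OF finite_supp supp_nonempty[OF l]] unfolding j_def .
  have "ternary l" "ternary m"
    using overlapping_supports[OF l m(1) j] m(2) j False unfolding m_def by auto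
  then have "b m j = 1 \<or> b m j = -1" "b l j = 1 \<or> b l j = -1"
    using ternary_supp_entry j m(2) by auto
  then show ?thesis using False unfolding vec_sign_def m_def[symmetric] j_def[symmetric] by auto
qed (simp add: vec_sign_def)

theorem signed_perm_block_basis:
  "\<exists>p s. is_signed_perm n p s \<and>
     (\<exists>b'. lattice_basis n (signed_perm n p s ` L) b' \<and> block_basis n b')"
proof (intro exI conjI)
  define p where "p q = (if q < n then coord_order ! q else q)" for q
  define s where "s q = coord_sign (coord_order ! q)" for q
  have coord: "coord_order ! q < n" if "q < n" for q
    using set_coord_order nth_mem[of q coord_order] that
      distinct_card[OF distinct_coord_order] by auto
  show sp: "is_signed_perm n p s"
    unfolding is_signed_perm_def p_def s_def
    using permutes_nth[OF distinct_coord_order set_coord_order] coord_sign_unit coord by blast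
  have vec: "bij_betw ((!) vec_order) {..<n} {..<n}"
    using bij_betw_nth[OF distinct_vec_order] set_vec_order distinct_card[OF distinct_vec_order]
    by simp
  show "lattice_basis n (signed_perm n p s ` L)
      (\<lambda>r k. vec_sign (vec_order ! r) * signed_perm n p s (b (vec_order ! r)) k)"
    using lattice_basis_reindex[OF lattice_basis_signed_perm[OF basis sp] vec]
      vec_sign_unit bij_betwE[OF vec] by auto
  show "block_basis n (\<lambda>r k. vec_sign (vec_order ! r) * signed_perm n p s (b (vec_order ! r)) k)"
    unfolding block_basis_def
  proof (intro exI conjI allI impI)
    show "sum_list (map bsize (map block_kind leaders)) = n" by (rule sum_bsize_leaders)
    fix q r assume "q < n" "r < n"
    then show "vec_sign (vec_order ! r) * signed_perm n p s (b (vec_order ! r)) q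
        = blockdiag (map block_kind leaders) q r"
      using normalized_entries_blockdiag[of q r]
      unfolding signed_perm_def p_def s_def normalized_entry_def by (simp add: algebra_simps)
  qed
qed

end

theorem theorem1p5:
  fixes n :: nat and L :: "(nat \<Rightarrow> int) set"
  assumes "orthogonal_sublattice n L"
  shows "cubiquitous n L \<longleftrightarrow>
    (\<exists>p s. is_signed_perm n p s \<and>
       (\<exists>b. lattice_basis n (signed_perm n p s ` L) b \<and> block_basis n b))"
proof
  assume cub: "cubiquitous n L"
  obtain b where "lattice_basis n L b" "\<forall>i<n. \<forall>j<n. i \<noteq> j \<longrightarrow> dot n (b i) (b j) = 0"
    using assms unfolding orthogonal_sublattice_def by blast
  then interpret cubiquitous_orthogonal_basis n L b
    using cub unfolding cubiquitous_def by unfold_locales auto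
  show "\<exists>p s. is_signed_perm n p s \<and>
      (\<exists>b. lattice_basis n (signed_perm n p s ` L) b \<and> block_basis n b)"
    by (rule signed_perm_block_basis)
next
  assume "\<exists>p s. is_signed_perm n p s \<and>
      (\<exists>b. lattice_basis n (signed_perm n p s ` L) b \<and> block_basis n b)"
  moreover have "full_rank_sublattice n L"
    using assms unfolding orthogonal_sublattice_def full_rank_sublattice_def by blast
  ultimately show "cubiquitous n L" using cubiquitous_if_block_basis by blast
qed

end
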